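(* Let $\mathcal{H}_n$ be an $n$-dimensional Hilbert space and let $F=\{f_i\}_{i=1}^N$ be a uniform normalized tight frame (UNTF) for $\mathcal{H}_n$. For $p>2$, the canonical dual $\{S_F^{-1}f_i\}_{i=1}^N$ of $F$ is the unique $1$-erasure Frobenius-optimal dual frame of $F$, i.e. $\zeta_{\mathfrak{F}}^{(1),p}(F)=\{S_F^{-1}F\}$. Consequently, it is also the unique $m$-erasure Frobenius-optimal dual frame of $F$, i.e. $\zeta_{\mathfrak{F}}^{(m),p}(F)=\{S_F^{-1}F\}$, for all $m\ge 1$.
   Context: A finite sequence $F=\{f_i\}_{i=1}^N$ in $\mathcal{H}_n$ is a frame if there are $0<A'\le B'$ with $A'\|f\|^2\le\sum_i|\langle f,f_i\rangle|^2\le B'\|f\|^2$ for all $f$; it is tight if one can take $A'=B'$ and Parseval if $A'=B'=1$. A uniform normalized tight frame (UNTF) is a Parseval frame all of whose vectors have the same norm (so $\|f_i\|^2=n/N$ and $S_F=I$). The analysis operator is $T_F:\mathcal{H}_n\to\mathbb{C}^N$, $T_Ff=(\langle f,f_i\rangle)_{i=1}^N$, with adjoint $T_F^*(c_i)=\sum_i c_if_i$; the frame operator is $S_F=T_F^*T_F$, and $S_F^{-1}F=\{S_F^{-1}f_i\}$ is the canonical dual. $G=\{g_i\}_{i=1}^N$ is a dual of $F$ if $T_G^*T_F=I$, i.e. $f=\sum_i\langle f,f_i\rangle g_i$ for all $f$. For $1\le m\le N$ let $\mathcal{D}^{(m)}$ be the set of $N\times N$ diagonal matrices with exactly $m$ diagonal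 entries equal to $1$ and the others $0$. For $p>1$ and a dual $G$ define \[\mathrm{AE}_{\mathfrak{F}}^{(m),p}(F,G)=\Big\{\tbinom{N}{m}^{-1}\sum_{D\in\mathcal{D}^{(m)}}\|T_G^*DT_F\|_{\mathfrak{F}}^p\Big\}^{1/p},\] where $\|\cdot\|_{\mathfrak{F}}$ is the Frobenius (Hilbert–Schmidt) norm; for $m=1$ this equals $\{\frac1N\sum_i(\|f_i\|\|g_i\|)^p\}^{1/p}$. Set $\mathrm{AE}_{\mathfrak{F}}^{(1),p}(F)=\inf\{\mathrm{AE}_{\mathfrak{F}}^{(1),p}(F,G): G\text{ dual of }F\}$ and $\zeta_{\mathfrak{F}}^{(1),p}(F)$ the set of duals attaining it ($1$-erasure Frobenius-optimal duals). Recursively, for $k>1$, $\mathrm{AE}_{\mathfrak{F}}^{(k),p}(F)=\inf\{\mathrm{AE}_{\mathfrak{F}}^{(k),p}(F,G):G\in\zeta_{\mathfrak{F}}^{(k-1),p}(F)\}$ and $\zeta_{\mathfrak{F}}^{(k),p}(F)=\{G\in\zeta_{\mathfrak{F}}^{(k-1),p}(F):\mathrm{AE}_{\mathfrak{F}}^{(k),p}(F,G)=\mathrm{AE}_{\mathfrak{F}}^{(k),p}(F)\}$ ($k$-erasure Frobenius-optimal duals). *)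

theory Defs
  imports "HOL-Analysis.Analysis"
begin

text \<open>The n-dimensional Hilbert space H_n is modelled as C^n = ('n \<Rightarrow> complex), 'n a finite
  index type with CARD('n) = n, with the standard inner product (linear in the first argument).
  A frame of N vectors is a map 'k \<Rightarrow> ('n \<Rightarrow> complex), 'k a finite index type with CARD('k) = N.\<close>

type_synonym 'n hvec = "'n \<Rightarrow> complex"

definition cinner :: "('n::finite) hvec \<Rightarrow> 'n hvec \<Rightarrow> complex" where
  "cinner x y = (\<Sum>j\<in>UNIV. x j * cnj (y j))"

definition hnorm :: "('n::finite) hvec \<Rightarrow> real" where
  "hnorm x = sqrt (\<Sum>j\<in>UNIV. (cmod (x j))\<^sup>2)"

definition is_frame :: "('k::finite \<Rightarrow> ('n::finite) hvec) \<Rightarrow> bool" where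
  "is_frame F \<longleftrightarrow> (\<exists>A B. 0 < A \<and> A \<le> B \<and>
     (\<forall>f. A * (hnorm f)\<^sup>2 \<le> (\<Sum>i\<in>UNIV. (cmod (cinner f (F i)))\<^sup>2) \<and>
          (\<Sum>i\<in>UNIV. (cmod (cinner f (F i)))\<^sup>2) \<le> B * (hnorm f)\<^sup>2))"

definition is_parseval_frame :: "('k::finite \<Rightarrow> ('n::finite) hvec) \<Rightarrow> bool" where
  "is_parseval_frame F \<longleftrightarrow>
     (\<forall>f. (\<Sum>i\<in>UNIV. (cmod (cinner f (F i)))\<^sup>2) = (hnorm f)\<^sup>2)"

definition is_UNTF :: "('k::finite \<Rightarrow> ('n::finite) hvec) \<Rightarrow> bool" where
  "is_UNTF F \<longleftrightarrow> is_frame F \<and> is_parseval_frame F \<and> (\<forall>i j. hnorm (F i) = hnorm (F j))"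

definition frame_op :: "('k::finite \<Rightarrow> ('n::finite) hvec) \<Rightarrow> 'n hvec \<Rightarrow> 'n hvec" where
  "frame_op F f = (\<lambda>j. \<Sum>i\<in>UNIV. cinner f (F i) * F i j)"

definition canonical_dual :: "('k::finite \<Rightarrow> ('n::finite) hvec) \<Rightarrow> 'k \<Rightarrow> 'n hvec" where
  "canonical_dual F i = (THE u. frame_op F u = F i)"

definition is_dual :: "('k::finite \<Rightarrow> ('n::finite) hvec) \<Rightarrow> ('k \<Rightarrow> 'n hvec) \<Rightarrow> bool" where
  "is_dual F G \<longleftrightarrow> (\<forall>f. f = (\<lambda>j. \<Sum>i\<in>UNIV. cinner f (F i) * G i j))"

text \<open>T_G^* D T_F for D the diagonal 0/1 matrix with support E.\<close>
definition erased_op :: "('k::finite \<Rightarrow> ('n::finite) hvec) \<Rightarrow> ('k \<Rightarrow> 'n hvec) \<Rightarrow> 'k set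
     \<Rightarrow> 'n hvec \<Rightarrow> 'n hvec" where
  "erased_op F G E f = (\<lambda>j. \<Sum>i\<in>E. cinner f (F i) * G i j)"

definition frob_norm :: "(('n::finite) hvec \<Rightarrow> 'n hvec) \<Rightarrow> real" where
  "frob_norm L = sqrt (\<Sum>j\<in>UNIV. (hnorm (L (\<lambda>k. if k = j then 1 else 0)))\<^sup>2)"

text \<open>AE_F^{(m),p}(F,G): the sum over D in D^(m) is the sum over subsets E of the index set with card E = m.\<close>
definition AE_frob :: "nat \<Rightarrow> real \<Rightarrow> ('k::finite \<Rightarrow> ('n::finite) hvec) \<Rightarrow> ('k \<Rightarrow> 'n hvec) \<Rightarrow> real" where
  "AE_frob m p F G = ((1 / real (CARD('k) choose m)) *
      (\<Sum>E\<in>{E::'k set. card E = m}. (frob_norm (erased_op F G E)) powr p)) powr (1 / p)"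

text \<open>zeta^{(k),p}(F): k-erasure Frobenius-optimal duals; level 0 is the set of all duals.\<close>
fun opt_duals :: "nat \<Rightarrow> real \<Rightarrow> ('k::finite \<Rightarrow> ('n::finite) hvec) \<Rightarrow> ('k \<Rightarrow> 'n hvec) set" where
  "opt_duals 0 p F = {G. is_dual F G}"
| "opt_duals (Suc k) p F =
     {G \<in> opt_duals k p F. AE_frob (Suc k) p F G = (INF G'\<in>opt_duals k p F. AE_frob (Suc k) p F G')}"

end

theory Submission
  imports Defs
begin

text \<open>A Parseval frame reproduces every vector from its own coefficients, so it is its own
  canonical dual, and for any dual G the dual condition fixes the trace \<Sum>i <g_i, f_i> = n.
  Expanding |g_i - f_i|^2 then gives \<Sum>i |g_i|^2 = n + \<Sum>i |g_i - f_i|^2. For a UNTF all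
  |f_i|^2 equal some c > 0, and the 1-erasure error of G is a monotone function of
  \<Sum>i (c |g_i|^2)^(p/2). As t \<mapsto> t^(p/2) is convex for p \<ge> 2, comparing each term with the tangent
  at t = c^2 shows that this sum exceeds its value at G = F by a positive multiple of
  \<Sum>i |g_i - f_i|^2. Hence F is the unique 1-erasure optimal dual, and every later level of the
  recursion minimises over a singleton.\<close>

definition std_basis :: "'n \<Rightarrow> ('n::finite) hvec" where
  "std_basis j = (\<lambda>k. if k = j then 1 else 0)"

lemma hnorm_nonneg: "0 \<le> hnorm x"
  unfolding hnorm_def by (intro real_sqrt_ge_zero sum_nonneg) simp

lemma hnorm_power2: "(hnorm x)\<^sup>2 = (\<Sum>j\<in>UNIV. (cmod (x j))\<^sup>2)"
  unfolding hnorm_def by (rule real_sqrt_pow2, rule sum_nonneg) simp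

lemma hnorm_power2_eq_0_iff: "(hnorm x)\<^sup>2 = 0 \<longleftrightarrow> x = (\<lambda>_. 0)"
  by (auto simp: hnorm_power2 sum_nonneg_eq_0_iff fun_eq_iff)

lemma hnorm_std_basis: "hnorm (std_basis j) = 1"
  unfolding hnorm_def std_basis_def by (simp add: if_distrib[of "\<lambda>z. (cmod z)\<^sup>2"] cong: if_cong)

lemma cinner_self: "cinner x x = (hnorm x)\<^sup>2"
  unfolding cinner_def hnorm_power2 by (simp only: of_real_sum complex_norm_square)

lemma cinner_std_basis_left: "cinner (std_basis j) y = cnj (y j)"
  unfolding cinner_def std_basis_def by (simp add: if_distrib[of "\<lambda>z. z * _"] cong: if_cong)

lemma cinner_lincomb_left:
  "cinner (\<lambda>l. a * x l + b * z l) y = a * cinner x y + b * cinner z y"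
  unfolding cinner_def by (simp add: algebra_simps sum.distrib sum_distrib_left)

lemma hnorm_diff_power2:
  "(hnorm (x - y))\<^sup>2 = (hnorm x)\<^sup>2 - 2 * Re (cinner x y) + (hnorm y)\<^sup>2"
proof -
  have "(cmod (a - b))\<^sup>2 = (cmod a)\<^sup>2 - 2 * Re (a * cnj b) + (cmod b)\<^sup>2" for a b :: complex
    by (simp only: cmod_power2) (simp add: power2_eq_square algebra_simps)
  then show ?thesis
    unfolding hnorm_power2 cinner_def
    by (simp add: sum.distrib sum_subtractf sum_distrib_left Re_sum)
qed

lemma parseval_frame_energy:
  assumes "is_parseval_frame F"
  shows "(\<Sum>i\<in>UNIV. cinner f (F i) * cnj (cinner f (F i))) = (hnorm f)\<^sup>2"
proof -
  have "(\<Sum>i\<in>UNIV. cinner f (F i) * cnj (cinner f (F i)))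
      = of_real (\<Sum>i\<in>UNIV. (cmod (cinner f (F i)))\<^sup>2)"
    by (simp only: of_real_sum complex_norm_square)
  then show ?thesis using assms unfolding is_parseval_frame_def by simp
qed

lemma parseval_frame_gram:
  fixes F :: "'k::finite \<Rightarrow> ('n::finite) hvec"
  assumes "is_parseval_frame F"
  shows "(\<Sum>i\<in>UNIV. cnj (F i j) * F i k) = (if j = k then 1 else 0)"
proof -
  define A where "A j k = (\<Sum>i\<in>UNIV. cnj (F i j) * F i k)" for j k
  have energy: "a * cnj a * A j j + a * cnj b * A j k + b * cnj a * A k j + b * cnj b * A k k
      = (hnorm (\<lambda>l. a * std_basis j l + b * std_basis k l))\<^sup>2" for a b j k
  proof -
    have "a * cnj a * A j j + a * cnj b * A j k + b * cnj a * A k j + b * cnj b * A k k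
        = (\<Sum>i\<in>UNIV. (a * cnj (F i j) + b * cnj (F i k)) * cnj (a * cnj (F i j) + b * cnj (F i k)))"
      unfolding A_def by (simp add: algebra_simps sum.distrib sum_distrib_left)
    also have "\<dots> = (hnorm (\<lambda>l. a * std_basis j l + b * std_basis k l))\<^sup>2"
      using parseval_frame_energy[OF assms, of "\<lambda>l. a * std_basis j l + b * std_basis k l"]
      by (simp add: cinner_lincomb_left cinner_std_basis_left)
    finally show ?thesis .
  qed
  \<comment> \<open>polarization: Parseval tested on e_j, e_j + e_k and e_j + i e_k\<close>
  have diagonal: "A j j = 1" for j
    using energy[of 1 j 0 j] by (simp add: hnorm_std_basis)
  have two_basis: "(hnorm (\<lambda>l. a * std_basis j l + b * std_basis k l))\<^sup>2 = (cmod a)\<^sup>2 + (cmod b)\<^sup>2"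
    if "j \<noteq> k" for a b j k
  proof -
    have "(cmod (a * std_basis j l + b * std_basis k l))\<^sup>2
        = (if l = j then (cmod a)\<^sup>2 else 0) + (if l = k then (cmod b)\<^sup>2 else 0)" for l
      using that unfolding std_basis_def by auto
    then show ?thesis unfolding hnorm_power2 by (simp add: sum.distrib)
  qed
  show ?thesis
  proof (cases "j = k")
    case True
    then show ?thesis using diagonal unfolding A_def by simp
  next
    case False
    have "A j k + A k j = 0"
      using energy[of 1 j 1 k] two_basis[OF False, of 1 1] diagonal by (simp del: of_real_power)
    moreover have "- \<i> * A j k + \<i> * A k j = 0"
      using energy[of 1 j \<i> k] two_basis[OF False, of 1 \<i>] diagonal by (simp del: of_real_power)
    ultimately have "A j k = 0" by (simp add: algebra_simps)
    then show ?thesis using False unfolding A_def by simp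
  qed
qed

lemma parseval_frame_op:
  assumes "is_parseval_frame F"
  shows "frame_op F f = f"
proof
  fix j
  have "frame_op F f j = (\<Sum>i\<in>UNIV. \<Sum>l\<in>UNIV. f l * cnj (F i l) * F i j)"
    unfolding frame_op_def cinner_def by (simp add: sum_distrib_right)
  also have "\<dots> = (\<Sum>l\<in>UNIV. f l * (\<Sum>i\<in>UNIV. cnj (F i l) * F i j))"
    by (subst sum.swap) (simp add: sum_distrib_left mult.assoc)
  also have "\<dots> = f j"
    by (simp add: parseval_frame_gram[OF assms] if_distrib[of "\<lambda>z. _ * z"] cong: if_cong)
  finally show "frame_op F f j = f j" .
qed

lemma canonical_dual_parseval:
  assumes "is_parseval_frame F"
  shows "canonical_dual F = F"
  unfolding canonical_dual_def using parseval_frame_op[OF assms] by simp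

lemma is_dual_parseval_self:
  assumes "is_parseval_frame F"
  shows "is_dual F F"
  using parseval_frame_op[OF assms] unfolding is_dual_def frame_op_def by metis

lemma is_dual_biorthogonal:
  fixes F :: "'k::finite \<Rightarrow> ('n::finite) hvec"
  assumes "is_dual F G"
  shows "(\<Sum>i\<in>UNIV. cnj (F i k) * G i j) = (if k = j then 1 else 0)"
proof -
  have "std_basis k j = (\<Sum>i\<in>UNIV. cinner (std_basis k) (F i) * G i j)"
    using assms unfolding is_dual_def by metis
  then show ?thesis by (simp only: cinner_std_basis_left) (auto simp: std_basis_def)
qed

lemma is_dual_trace:
  fixes F :: "'k::finite \<Rightarrow> ('n::finite) hvec"
  assumes "is_dual F G"
  shows "(\<Sum>i\<in>UNIV. cinner (G i) (F i)) = of_nat CARD('n)"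
proof -
  have "(\<Sum>i\<in>UNIV. cinner (G i) (F i)) = (\<Sum>k\<in>UNIV. \<Sum>i\<in>UNIV. cnj (F i k) * G i k)"
    unfolding cinner_def by (subst sum.swap) (simp add: mult.commute)
  also have "\<dots> = of_nat CARD('n)" by (simp add: is_dual_biorthogonal[OF assms])
  finally show ?thesis .
qed

lemma self_dual_sum_hnorm_power2:
  fixes F :: "'k::finite \<Rightarrow> ('n::finite) hvec"
  assumes "is_dual F F"
  shows "(\<Sum>i\<in>UNIV. (hnorm (F i))\<^sup>2) = real CARD('n)"
  using arg_cong[OF is_dual_trace[OF assms], of Re] by (simp add: cinner_self Re_sum)

lemma dual_sum_hnorm_power2:
  fixes F :: "'k::finite \<Rightarrow> ('n::finite) hvec"
  assumes "is_dual F G" "is_dual F F"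
  shows "(\<Sum>i\<in>UNIV. (hnorm (G i))\<^sup>2)
    = real CARD('n) + (\<Sum>i\<in>UNIV. (hnorm (G i - F i))\<^sup>2)"
proof -
  have "Re (\<Sum>i\<in>UNIV. cinner (G i) (F i)) = real CARD('n)"
    by (simp add: is_dual_trace[OF assms(1)])
  then show ?thesis
    using self_dual_sum_hnorm_power2[OF assms(2)]
    by (simp add: hnorm_diff_power2 sum.distrib sum_subtractf Re_sum flip: sum_distrib_left)
qed

lemma frob_norm_std_basis: "frob_norm L = sqrt (\<Sum>j\<in>UNIV. (hnorm (L (std_basis j)))\<^sup>2)"
  unfolding frob_norm_def std_basis_def ..

lemma frob_norm_erased_singleton:
  fixes F :: "'k::finite \<Rightarrow> ('n::finite) hvec"
  shows "frob_norm (erased_op F G {i}) = hnorm (F i) * hnorm (G i)"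
proof -
  have "erased_op F G {i} (std_basis j) = (\<lambda>l. cnj (F i j) * G i l)" for j
    unfolding erased_op_def by (simp add: cinner_std_basis_left)
  then have "(hnorm (erased_op F G {i} (std_basis j)))\<^sup>2 = (cmod (F i j))\<^sup>2 * (hnorm (G i))\<^sup>2" for j
    by (simp add: hnorm_power2 norm_mult power_mult_distrib sum_distrib_left)
  then have "(\<Sum>j\<in>UNIV. (hnorm (erased_op F G {i} (std_basis j)))\<^sup>2) = (hnorm (F i) * hnorm (G i))\<^sup>2"
    by (simp add: hnorm_power2 power_mult_distrib sum_distrib_right)
  then show ?thesis
    by (simp add: frob_norm_std_basis hnorm_nonneg)
qed

lemma AE_frob_1:
  fixes F :: "'k::finite \<Rightarrow> ('n::finite) hvec"
  shows "AE_frob 1 p F G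
    = ((1 / real CARD('k)) * (\<Sum>i\<in>UNIV. (hnorm (F i) * hnorm (G i)) powr p)) powr (1 / p)"
proof -
  have "{E::'k set. card E = 1} = (\<lambda>i. {i}) ` UNIV" by (auto simp: card_1_singleton_iff)
  then have "(\<Sum>E | card E = 1. (frob_norm (erased_op F G E)) powr p)
      = (\<Sum>i\<in>UNIV. (frob_norm (erased_op F G {i})) powr p)"
    by (simp add: sum.reindex)
  then show ?thesis unfolding AE_frob_def by (simp add: frob_norm_erased_singleton)
qed

lemma powr_ge_tangent:
  fixes x y r :: real
  assumes "0 \<le> x" "0 < y" "1 \<le> r"
  shows "y powr r + r * y powr (r - 1) * (x - y) \<le> x powr r"
proof (cases "x = 0")
  case True
  have "y powr r + r * y powr (r - 1) * (x - y) = (1 - r) * y powr r"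
    using True assms by (simp add: powr_diff algebra_simps)
  also have "\<dots> \<le> 0" using assms by (simp add: mult_nonpos_nonneg)
  finally show ?thesis using True by simp
next
  case False
  have "r * y powr (r - 1) * (x - y) \<le> x powr r - y powr r"
    using assms False
    by (intro convex_on_imp_above_tangent[where A = "{0<..}", OF powr_convex[OF assms(3)]])
       (auto intro!: derivative_eq_intros simp: interior_open)
  then show ?thesis by simp
qed

lemma powr_eq_power2_powr_half:
  fixes x p :: real
  assumes "0 \<le> x"
  shows "x powr p = (x\<^sup>2) powr (p / 2)"
proof -
  have "x\<^sup>2 = x powr 2"
    using assms by (cases "x = 0") (simp_all add: powr_realpow)
  also have "(x powr 2) powr (p / 2) = x powr p" by (simp add: powr_powr)
  finally show ?thesis by simp
qed

lemma is_dual_untf_self: "is_UNTF F \<Longrightarrow> is_dual F F"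
  unfolding is_UNTF_def by (blast intro: is_dual_parseval_self)

lemma untf_hnorm_power2:
  fixes F :: "'k::finite \<Rightarrow> ('n::finite) hvec"
  assumes "is_UNTF F"
  shows "(hnorm (F i))\<^sup>2 = real CARD('n) / real CARD('k)"
proof -
  have equal_norms: "(hnorm (F j))\<^sup>2 = (hnorm (F i))\<^sup>2" for j
    using assms unfolding is_UNTF_def by metis
  have "(\<Sum>j\<in>UNIV. (hnorm (F j))\<^sup>2) = (\<Sum>j\<in>(UNIV::'k set). (hnorm (F i))\<^sup>2)"
    by (rule sum.cong[OF refl equal_norms])
  then have "real CARD('k) * (hnorm (F i))\<^sup>2 = real CARD('n)"
    using self_dual_sum_hnorm_power2[OF is_dual_untf_self[OF assms]] by simp
  then show ?thesis by (simp add: field_simps)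
qed

lemma sum_hnorm_diff_power2_pos:
  fixes F G :: "'k::finite \<Rightarrow> ('n::finite) hvec"
  assumes "G \<noteq> F"
  shows "(\<Sum>i\<in>UNIV. (hnorm (G i - F i))\<^sup>2) > 0"
proof -
  obtain i where "G i \<noteq> F i" using assms by blast
  then have "(hnorm (G i - F i))\<^sup>2 > 0"
    using hnorm_power2_eq_0_iff[of "G i - F i"] by (auto simp: fun_eq_iff)
  then show ?thesis by (intro sum_pos2[of UNIV i]) auto
qed

lemma untf_erasure_sum_less:
  fixes F :: "'k::finite \<Rightarrow> ('n::finite) hvec" and p :: real
  assumes F: "is_UNTF F" and p: "2 \<le> p" and G: "is_dual F G" "G \<noteq> F"
  shows "(\<Sum>i\<in>UNIV. (hnorm (F i) * hnorm (F i)) powr p)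
    < (\<Sum>i\<in>UNIV. (hnorm (F i) * hnorm (G i)) powr p)"
proof -
  define N where "N = real CARD('k)"
  define c where "c = real CARD('n) / N"
  have c: "(hnorm (F i))\<^sup>2 = c" for i
    using untf_hnorm_power2[OF F] unfolding c_def N_def .
  have "c > 0" unfolding c_def N_def by simp
  define D where "D = (\<Sum>i\<in>UNIV. (hnorm (G i - F i))\<^sup>2)"
  have sum_G: "(\<Sum>i\<in>UNIV. (hnorm (G i))\<^sup>2) = N * c + D"
    using dual_sum_hnorm_power2[OF G(1) is_dual_untf_self[OF F]]
    unfolding D_def c_def N_def by simp
  define r where "r = p / 2"
  define K where "K = r * (c * c) powr (r - 1)"
  have term_eq: "(hnorm (F i) * hnorm H) powr p = (c * (hnorm H)\<^sup>2) powr r" for i H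
    using powr_eq_power2_powr_half[of "hnorm (F i) * hnorm H" p]
    by (simp add: hnorm_nonneg power_mult_distrib c r_def)
  have tangent: "(c * c) powr r + K * (c * (hnorm (G i))\<^sup>2 - c * c) \<le> (c * (hnorm (G i))\<^sup>2) powr r"
    for i
    using powr_ge_tangent[of "c * (hnorm (G i))\<^sup>2" "c * c" r] \<open>c > 0\<close> p
    unfolding K_def r_def by (simp add: mult.assoc)
  have "0 < K * c * D"
    using p \<open>c > 0\<close> sum_hnorm_diff_power2_pos[OF G(2)] unfolding K_def r_def D_def by simp
  also have "(\<Sum>i\<in>UNIV. (hnorm (F i) * hnorm (F i)) powr p) + K * c * D
      = (\<Sum>i\<in>UNIV. (c * c) powr r + K * (c * (hnorm (G i))\<^sup>2 - c * c))"
    by (simp add: term_eq c sum.distrib sum_subtractf flip: sum_distrib_left)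
       (simp add: sum_G N_def algebra_simps)
  also have "\<dots> \<le> (\<Sum>i\<in>UNIV. (hnorm (F i) * hnorm (G i)) powr p)"
    unfolding term_eq by (intro sum_mono tangent)
  finally show ?thesis by simp
qed

lemma AE_frob_1_untf_less:
  fixes F :: "'k::finite \<Rightarrow> ('n::finite) hvec" and p :: real
  assumes "is_UNTF F" "2 \<le> p" "is_dual F G" "G \<noteq> F"
  shows "AE_frob 1 p F F < AE_frob 1 p F G"
  unfolding AE_frob_1 using untf_erasure_sum_less[OF assms] assms(2)
  by (intro powr_less_mono2 mult_strict_left_mono) (auto intro!: divide_nonneg_nonneg sum_nonneg)

lemma opt_duals_1_untf:
  fixes F :: "'k::finite \<Rightarrow> ('n::finite) hvec" and p :: real
  assumes F: "is_UNTF F" and p: "2 \<le> p"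
  shows "opt_duals 1 p F = {F}"
proof -
  have self_dual: "is_dual F F" using is_dual_untf_self[OF F] .
  have F_le: "AE_frob 1 p F F \<le> AE_frob 1 p F G" if "is_dual F G" for G
    using AE_frob_1_untf_less[OF F p that] by (cases "G = F") auto
  have "(INF G\<in>{G. is_dual F G}. AE_frob 1 p F G) = AE_frob 1 p F F"
    using self_dual F_le by (intro cInf_eq_minimum) auto
  then show ?thesis
    using self_dual AE_frob_1_untf_less[OF F p] by (auto simp: One_nat_def) (metis less_irrefl)
qed

lemma opt_duals_singleton_stable:
  assumes "opt_duals k p F = {G}" "k \<le> m"
  shows "opt_duals m p F = {G}"
  using assms(2) by (induction m rule: dec_induct) (auto simp: assms(1))

theorem proposition3p1:
  fixes F :: "'k::finite \<Rightarrow> ('n::finite) hvec" and p :: real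
  assumes "is_UNTF F" and "p > 2"
  shows "opt_duals 1 p F = {canonical_dual F}
    \<and> (\<forall>m. 1 \<le> m \<and> m \<le> CARD('k) \<longrightarrow> opt_duals m p F = {canonical_dual F})"
proof -
  have "canonical_dual F = F"
    using assms(1) canonical_dual_parseval unfolding is_UNTF_def by blast
  moreover have level_1: "opt_duals 1 p F = {F}"
    using opt_duals_1_untf[OF assms(1)] assms(2) by (simp del: opt_duals.simps)
  moreover have "opt_duals m p F = {F}" if "1 \<le> m" for m
    using opt_duals_singleton_stable[OF level_1 that] .
  ultimately show ?thesis by simp
qed

end
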